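(* Let $G$ be a locally compact Abelian group with a fixed Haar measure $\lambda_G$, and let $\Omega\subset G$ be a measurable subset with $\lambda_G(\Omega)<\infty$. Then there is an open $\sigma$-compact subgroup $H$ of $G$ with $\Omega\subset H$ such that $$\mathcal{D}_G(\Omega)=\mathcal{D}_H(\Omega),$$ where $H$ is equipped with the Haar measure $\lambda_H:=\lambda_G|_H$.
   Context: All locally compact Abelian (LCA) groups are assumed Hausdorff, with identity $0$. A function $f:G\to\mathbb{C}$ is positive definite if $\sum_{i,j=1}^n c_i\overline{c_j} f(g_i-g_j)\ge 0$ for all $n\in\mathbb{N}$, $c_i\in\mathbb{C}$, $g_i\in G$. $P_1(G)$ denotes the set of continuous positive definite functions $f:G\to\mathbb{R}$ with $f(0)=1$. For $f:G\to\mathbb{R}$, $f_+(g):=\max\{f(g),0\}$ and $\operatorname{supp} f:=\overline{\{g\in G: f(g)\neq 0\}}$. For a LCA group $G$ with Haar measure $\lambda_G$ and $\Omega\subset G$, define $$\mathcal{G}_G(\Omega):=\{f\in P_1(G)\cap L^1(G): \operatorname{supp} f_+\subset\Omega\},\qquad \mathcal{D}_G(\Omega):=\sup_{f\in\mathcal{G}_G(\Omega)}\int_G f\,d\lambda_G,$$ with the convention that $\mathcal{D}_G(\Omega)=0$ when $\mathcal{G}_G(\Omega)$ is empty. The same definitions apply with $H$ in place of $G$. *)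

theory Defs
  imports "HOL-Analysis.Analysis"
begin

definition lca_group :: "'a::{topological_ab_group_add,t2_space} itself \<Rightarrow> bool" where
  "lca_group _ \<longleftrightarrow> locally_compact_space (euclidean :: 'a topology)"

definition haar_measure :: "'a::{topological_ab_group_add,t2_space} measure \<Rightarrow> bool" where
  "haar_measure M \<longleftrightarrow>
     sets M = sets borel \<and>
     (\<forall>A\<in>sets M. \<forall>x. emeasure M ((\<lambda>y. x + y) ` A) = emeasure M A) \<and>
     (\<forall>K. compact K \<longrightarrow> emeasure M K < \<infinity>) \<and>
     (\<forall>A\<in>sets M. emeasure M A = (INF U\<in>{U. open U \<and> A \<subseteq> U}. emeasure M U)) \<and>
     (\<forall>U. open U \<longrightarrow> emeasure M U = (SUP K\<in>{K. compact K \<and> K \<subseteq> U}. emeasure M K)) \<and>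
     emeasure M UNIV \<noteq> 0"

definition subgroup_set :: "'a::ab_group_add set \<Rightarrow> bool" where
  "subgroup_set H \<longleftrightarrow> 0 \<in> H \<and> (\<forall>x\<in>H. \<forall>y\<in>H. x + y \<in> H) \<and> (\<forall>x\<in>H. - x \<in> H)"

definition sigma_compact :: "'a::topological_space set \<Rightarrow> bool" where
  "sigma_compact H \<longleftrightarrow> (\<exists>K::nat \<Rightarrow> 'a set. (\<forall>n. compact (K n)) \<and> H = (\<Union>n. K n))"

definition pos_def_on :: "'a::ab_group_add set \<Rightarrow> ('a \<Rightarrow> real) \<Rightarrow> bool" where
  "pos_def_on H f \<longleftrightarrow>
     (\<forall>(n::nat) (c::nat \<Rightarrow> complex) (g::nat \<Rightarrow> 'a). (\<forall>i<n. g i \<in> H) \<longrightarrow>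
        (let s = (\<Sum>i<n. \<Sum>j<n. c i * cnj (c j) * complex_of_real (f (g i - g j)))
         in Im s = 0 \<and> Re s \<ge> 0))"

definition supp_on :: "'a::topological_space set \<Rightarrow> ('a \<Rightarrow> real) \<Rightarrow> 'a set" where
  "supp_on H f = H \<inter> closure {g\<in>H. f g \<noteq> 0}"

definition pos_part :: "('a \<Rightarrow> real) \<Rightarrow> 'a \<Rightarrow> real" where
  "pos_part f = (\<lambda>g. max (f g) 0)"

text \<open>\<open>GG M H \<Omega>\<close> is \<open>\<G>_H(\<Omega>)\<close> for the group H with Haar measure M restricted to H:
  continuous positive definite real functions on H with f 0 = 1, integrable on H,
  whose positive part has support inside \<Omega>.\<close>

definition GG :: "'a::{topological_ab_group_add,t2_space} measure \<Rightarrow> 'a set \<Rightarrow> 'a set \<Rightarrow> ('a \<Rightarrow> real) set" where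
  "GG M H \<Omega> = {f. continuous_on H f \<and> pos_def_on H f \<and> f 0 = 1 \<and>
                   integrable (restrict_space M H) f \<and> supp_on H (pos_part f) \<subseteq> \<Omega>}"

definition DD :: "'a::{topological_ab_group_add,t2_space} measure \<Rightarrow> 'a set \<Rightarrow> 'a set \<Rightarrow> real" where
  "DD M H \<Omega> = (if GG M H \<Omega> = {} then 0
               else (SUP f\<in>GG M H \<Omega>. integral\<^sup>L (restrict_space M H) f))"

end

theory Submission
  imports Defs
begin

text \<open>By outer regularity \<open>\<Omega>\<close> lies in an open set \<open>U\<close> of finite measure, and by inner
  regularity there are compact \<open>K\<^sub>n \<subseteq> U\<close> with \<open>\<lambda>(K\<^sub>n) \<rightarrow> \<lambda>(U)\<close>. Together with a compact
  neighbourhood \<open>K\<^sub>0\<close> of \<open>0\<close> they generate an open \<open>\<sigma>\<close>-compact subgroup \<open>H\<close>. It contains \<open>U\<close>: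
  for \<open>x \<in> U - H\<close> the open set \<open>U \<inter> (x + H)\<close> has positive Haar measure, yet it lies in
  \<open>U - K\<^sub>n\<close> for every \<open>n\<close>.

  Since \<open>\<Omega> \<subseteq> H\<close>, a function of \<open>\<G>\<^sub>G(\<Omega>)\<close> is \<open>\<le> 0\<close> off \<open>H\<close>, so restricting it to \<open>H\<close>
  does not decrease its integral; conversely, extending a function of \<open>\<G>\<^sub>H(\<Omega>)\<close> by zero
  keeps it continuous (\<open>H\<close> is open and closed) and positive definite (the quadratic form
  splits along the cosets of \<open>H\<close>), with the same integral.\<close>

lemma open_translation_group:
  fixes S :: "'a::topological_group_add set"
  assumes "open S"
  shows "open ((\<lambda>y. a + y) ` S)"
proof -
  have "(\<lambda>y. a + y) ` S = (\<lambda>y. - a + y) -` S"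
    by (force simp: algebra_simps)
  moreover have "continuous_on UNIV (\<lambda>y::'a. - a + y)"
    by (intro continuous_intros)
  ultimately show ?thesis
    using assms open_vimage by metis
qed

lemma subgroup_set_UNIV: "subgroup_set UNIV"
  unfolding subgroup_set_def by simp

lemma subgroup_set_diff:
  "subgroup_set H \<Longrightarrow> x \<in> H \<Longrightarrow> y \<in> H \<Longrightarrow> x - y \<in> H"
  unfolding subgroup_set_def by (metis diff_conv_add_uminus)

lemma subgroup_set_translation_disjoint:
  assumes "subgroup_set H" "x \<notin> H"
  shows "(\<lambda>y. x + y) ` H \<inter> H = {}"
proof -
  have "x + h \<notin> H" if "h \<in> H" for h
    using subgroup_set_diff[OF assms(1), of "x + h" h] that assms(2) by auto
  then show ?thesis
    by blast
qed

lemma open_subgroup_set_if_neighbourhood: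
  fixes H :: "'a::topological_ab_group_add set"
  assumes "subgroup_set H" "open V" "0 \<in> V" "V \<subseteq> H"
  shows "open H"
proof -
  have "H = (\<Union>x\<in>H. (\<lambda>y. x + y) ` V)"
  proof (intro equalityI subsetI)
    show "h \<in> (\<Union>x\<in>H. (\<lambda>y. x + y) ` V)" if "h \<in> H" for h
      using that assms(3) by (auto intro!: image_eqI[where x = 0])
    show "z \<in> H" if "z \<in> (\<Union>x\<in>H. (\<lambda>y. x + y) ` V)" for z
      using that assms(1,4) unfolding subgroup_set_def by blast
  qed
  then show ?thesis
    using open_translation_group[OF assms(2)] open_UN by metis
qed

lemma closed_open_subgroup_set:
  fixes H :: "'a::topological_ab_group_add set"
  assumes "subgroup_set H" "open H"
  shows "closed H"
proof -
  have "0 \<in> H"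
    using assms(1) unfolding subgroup_set_def by blast
  have "- H = (\<Union>x\<in>- H. (\<lambda>y. x + y) ` H)"
  proof (intro equalityI subsetI)
    show "x \<in> (\<Union>x\<in>- H. (\<lambda>y. x + y) ` H)" if "x \<in> - H" for x
      using that \<open>0 \<in> H\<close> by (auto intro!: image_eqI[where x = 0])
    show "z \<in> - H" if "z \<in> (\<Union>x\<in>- H. (\<lambda>y. x + y) ` H)" for z
      using that subgroup_set_translation_disjoint[OF assms(1)] by blast
  qed
  then have "open (- H)"
    using open_translation_group[OF assms(2)] open_UN by metis
  then show ?thesis
    by (simp add: closed_open)
qed

lemma sigma_compact_iff_countable_Union:
  "sigma_compact S \<longleftrightarrow> (\<exists>\<K>. countable \<K> \<and> (\<forall>K\<in>\<K>. compact K) \<and> S = \<Union>\<K>)"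
proof
  assume "sigma_compact S"
  then obtain K :: "nat \<Rightarrow> _" where "\<forall>n. compact (K n)" "S = (\<Union>n. K n)"
    unfolding sigma_compact_def by blast
  then show "\<exists>\<K>. countable \<K> \<and> (\<forall>K\<in>\<K>. compact K) \<and> S = \<Union>\<K>"
    by (intro exI[of _ "range K"]) auto
next
  assume "\<exists>\<K>. countable \<K> \<and> (\<forall>K\<in>\<K>. compact K) \<and> S = \<Union>\<K>"
  then obtain \<K> where \<K>: "countable \<K>" "\<forall>K\<in>\<K>. compact K" "S = \<Union>\<K>"
    by blast
  show "sigma_compact S"
  proof (cases "\<K> = {}")
    case True
    then show ?thesis
      unfolding sigma_compact_def using \<K> by (intro exI[of _ "\<lambda>_. {}"]) auto
  next
    case False
    then show ?thesis
      unfolding sigma_compact_def using \<K>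
      by (intro exI[of _ "from_nat_into \<K>"]) (auto simp: range_from_nat_into from_nat_into)
  qed
qed

lemma sigma_compact_compact: "compact K \<Longrightarrow> sigma_compact K"
  unfolding sigma_compact_def by (intro exI[of _ "\<lambda>_. K"]) auto

lemma sigma_compact_UN:
  assumes "countable I" "\<And>i. i \<in> I \<Longrightarrow> sigma_compact (A i)"
  shows "sigma_compact (\<Union>i\<in>I. A i)"
proof -
  obtain \<K> where "\<And>i. i \<in> I \<Longrightarrow> countable (\<K> i) \<and> (\<forall>K\<in>\<K> i. compact K) \<and> A i = \<Union>(\<K> i)"
    using assms(2) unfolding sigma_compact_iff_countable_Union by metis
  then show ?thesis
    unfolding sigma_compact_iff_countable_Union
    by (intro exI[of _ "\<Union>i\<in>I. \<K> i"]) (use assms(1) in auto)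
qed

lemma sigma_compact_Un:
  assumes "sigma_compact A" "sigma_compact B"
  shows "sigma_compact (A \<union> B)"
proof -
  have "sigma_compact (\<Union>X\<in>{A, B}. X)"
    by (rule sigma_compact_UN) (use assms in auto)
  then show ?thesis
    by simp
qed

lemma sigma_compact_sums:
  fixes A B :: "'a::topological_monoid_add set"
  assumes "sigma_compact A" "sigma_compact B"
  shows "sigma_compact ((\<lambda>(x, y). x + y) ` (A \<times> B))"
proof -
  obtain \<A> where \<A>: "countable \<A>" "\<forall>K\<in>\<A>. compact K" "A = \<Union>\<A>"
    using assms(1) unfolding sigma_compact_iff_countable_Union by blast
  obtain \<B> where \<B>: "countable \<B>" "\<forall>K\<in>\<B>. compact K" "B = \<Union>\<B>"
    using assms(2) unfolding sigma_compact_iff_countable_Union by blast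
  have "compact ((\<lambda>(x, y). x + y) ` (K \<times> L))" if "compact K" "compact L" for K L :: "'a set"
    using that by (intro compact_continuous_image compact_Times)
                  (auto intro!: continuous_intros simp: case_prod_beta')
  then have "sigma_compact (\<Union>(K, L)\<in>\<A> \<times> \<B>. (\<lambda>(x, y). x + y) ` (K \<times> L))"
    using \<A> \<B> by (intro sigma_compact_UN sigma_compact_compact) auto
  moreover have "(\<lambda>(x, y). x + y) ` (A \<times> B) = (\<Union>(K, L)\<in>\<A> \<times> \<B>. (\<lambda>(x, y). x + y) ` (K \<times> L))"
    unfolding \<A>(3) \<B>(3) by force
  ultimately show ?thesis
    by simp
qed

lemma sigma_compact_negations:
  fixes A :: "'a::topological_group_add set"
  assumes "sigma_compact A"
  shows "sigma_compact (uminus ` A)"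
proof -
  obtain K :: "nat \<Rightarrow> 'a set" where "\<forall>n. compact (K n)" "A = (\<Union>n. K n)"
    using assms unfolding sigma_compact_def by blast
  then show ?thesis
    unfolding sigma_compact_def
    by (intro exI[of _ "\<lambda>n. uminus ` K n"]) (auto intro!: compact_continuous_image continuous_intros)
qed

primrec signed_sums :: "'a::ab_group_add set \<Rightarrow> nat \<Rightarrow> 'a set" where
  "signed_sums E 0 = {0}"
| "signed_sums E (Suc n) = (\<lambda>(x, e). x + e) ` (signed_sums E n \<times> (E \<union> uminus ` E))"

definition subgroup_generated :: "'a::ab_group_add set \<Rightarrow> 'a set" where
  "subgroup_generated E = (\<Union>n. signed_sums E n)"

lemma signed_sums_add:
  "x \<in> signed_sums E m \<Longrightarrow> y \<in> signed_sums E n \<Longrightarrow> x + y \<in> signed_sums E (m + n)"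
proof (induction n arbitrary: y)
  case (Suc n)
  then obtain y' e where y: "y = y' + e" "y' \<in> signed_sums E n" "e \<in> E \<union> uminus ` E"
    by auto
  have "x + y = (x + y') + e"
    by (simp add: y(1) add.assoc)
  moreover have "x + y' \<in> signed_sums E (m + n)"
    using Suc.IH Suc.prems(1) y(2) by blast
  ultimately show ?case
    using y(3) by (auto intro!: image_eqI[where x = "(x + y', e)"])
qed simp

lemma signed_sums_minus: "x \<in> signed_sums E n \<Longrightarrow> - x \<in> signed_sums E n"
proof (induction n arbitrary: x)
  case (Suc n)
  then obtain x' e where x: "x = x' + e" "x' \<in> signed_sums E n" "e \<in> E \<union> uminus ` E"
    by auto
  have "- x = - x' + - e"
    by (simp add: x(1))
  moreover have "- x' \<in> signed_sums E n" "- e \<in> E \<union> uminus ` E"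
    using Suc.IH x(2,3) by auto
  ultimately show ?case
    by (auto intro!: image_eqI[where x = "(- x', - e)"])
qed simp

lemma subgroup_set_subgroup_generated: "subgroup_set (subgroup_generated E)"
  unfolding subgroup_set_def subgroup_generated_def
proof (intro conjI ballI)
  show "0 \<in> (\<Union>n. signed_sums E n)"
    using signed_sums.simps(1) by blast
  show "x + y \<in> (\<Union>n. signed_sums E n)" if "x \<in> (\<Union>n. signed_sums E n)" "y \<in> (\<Union>n. signed_sums E n)" for x y
    using that signed_sums_add by blast
  show "- x \<in> (\<Union>n. signed_sums E n)" if "x \<in> (\<Union>n. signed_sums E n)" for x
    using that signed_sums_minus by blast
qed

lemma subset_subgroup_generated: "E \<subseteq> subgroup_generated E"
proof
  fix e assume "e \<in> E"
  then have "e \<in> signed_sums E 1"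
    by (auto intro!: image_eqI[where x = "(0, e)"])
  then show "e \<in> subgroup_generated E"
    unfolding subgroup_generated_def by blast
qed

lemma sigma_compact_subgroup_generated:
  fixes E :: "'a::topological_ab_group_add set"
  assumes "sigma_compact E"
  shows "sigma_compact (subgroup_generated E)"
proof -
  have "sigma_compact (signed_sums E n)" for n
    by (induction n) (simp_all add: assms sigma_compact_compact sigma_compact_sums
                                    sigma_compact_Un sigma_compact_negations)
  then show ?thesis
    unfolding subgroup_generated_def by (intro sigma_compact_UN) auto
qed

lemma haar_measureD:
  fixes M :: "'a::{topological_ab_group_add,t2_space} measure"
  assumes "haar_measure M"
  shows "sets M = sets borel"
    and "A \<in> sets M \<Longrightarrow> emeasure M ((\<lambda>y. x + y) ` A) = emeasure M A"
    and "A \<in> sets M \<Longrightarrow> emeasure M A = (INF U\<in>{U. open U \<and> A \<subseteq> U}. emeasure M U)"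
    and "open U \<Longrightarrow> emeasure M U = (SUP K\<in>{K. compact K \<and> K \<subseteq> U}. emeasure M K)"
    and "emeasure M UNIV \<noteq> 0"
  using assms unfolding haar_measure_def by auto

lemma space_haar_measure:
  fixes M :: "'a::{topological_ab_group_add,t2_space} measure"
  shows "haar_measure M \<Longrightarrow> space M = UNIV"
  using sets_eq_imp_space_eq[OF haar_measureD(1)] by simp

lemma sets_haar_measure_open:
  fixes M :: "'a::{topological_ab_group_add,t2_space} measure"
  assumes "haar_measure M" "open A"
  shows "A \<in> sets M"
  using haar_measureD(1)[OF assms(1)] assms(2) by simp

lemma sets_haar_measure_compact:
  fixes M :: "'a::{topological_ab_group_add,t2_space} measure"
  assumes "haar_measure M" "compact K"
  shows "K \<in> sets M"
  using haar_measureD(1)[OF assms(1)] compact_imp_closed[OF assms(2)] by simp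

lemma emeasure_haar_open_nonzero:
  fixes M :: "'a::{topological_ab_group_add,t2_space} measure"
  assumes M: "haar_measure M" and D: "open D" "d \<in> D"
  shows "emeasure M D \<noteq> 0"
proof
  assume D0: "emeasure M D = 0"
  define T where "T x = (\<lambda>y. (x - d) + y) ` D" for x
  have T_sets: "T x \<in> sets M" for x
    unfolding T_def by (intro sets_haar_measure_open[OF M] open_translation_group D(1))
  have T0: "emeasure M (T x) = 0" for x
    unfolding T_def using haar_measureD(2)[OF M sets_haar_measure_open[OF M D(1)]] D0 by simp
  have "emeasure M K = 0" if "compact K" for K
  proof -
    have "K \<subseteq> \<Union>(T ` K)"
      using D(2) unfolding T_def by (force intro!: image_eqI[where x = d])
    then obtain F where F: "F \<subseteq> K" "finite F" "K \<subseteq> \<Union>(T ` F)"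
      using compactE_image[OF \<open>compact K\<close>] D(1) open_translation_group unfolding T_def by metis
    have "emeasure M K \<le> emeasure M (\<Union>(T ` F))"
      using F(2,3) T_sets by (intro emeasure_mono) auto
    also have "\<dots> \<le> (\<Sum>x\<in>F. emeasure M (T x))"
      using F(2) T_sets by (intro emeasure_subadditive_finite) auto
    finally show ?thesis
      using T0 by simp
  qed
  then have "(SUP K\<in>{K. compact K \<and> K \<subseteq> UNIV}. emeasure M K) = 0"
    by (intro SUP_eq_const) (auto intro: exI[of _ "{}"])
  then show False
    using haar_measureD(4,5)[OF M] by simp
qed

lemma haar_inner_approx_open:
  fixes M :: "'a::{topological_ab_group_add,t2_space} measure"
  assumes M: "haar_measure M" and U: "open U" "emeasure M U < \<infinity>" and "e > 0"
  obtains K where "compact K" "K \<subseteq> U" "measure M U \<le> measure M K + e"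
proof (cases "measure M U \<le> e")
  case True
  then show ?thesis
    by (intro that[of "{}"]) auto
next
  case False
  have "ennreal (measure M U - e) < ennreal (measure M U)"
    using False \<open>e > 0\<close> by (simp add: ennreal_lessI)
  also have "\<dots> = emeasure M U"
    using U(2) by (simp add: emeasure_eq_ennreal_measure)
  also have "\<dots> = (SUP K\<in>{K. compact K \<and> K \<subseteq> U}. emeasure M K)"
    by (rule haar_measureD(4)[OF M U(1)])
  finally obtain K where K: "compact K" "K \<subseteq> U" "ennreal (measure M U - e) < emeasure M K"
    by (auto simp: less_SUP_iff)
  moreover have "emeasure M K = ennreal (measure M K)"
    using emeasure_mono[OF K(2) sets_haar_measure_open[OF M U(1)]] U(2)
    by (intro emeasure_eq_ennreal_measure) auto
  ultimately show ?thesis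
    using False by (intro that[of K]) (auto simp: ennreal_less_iff)
qed

lemma haar_open_subset_open_subgroup:
  fixes M :: "'a::{topological_ab_group_add,t2_space} measure"
  assumes M: "haar_measure M" and G: "open G" "subgroup_set G"
    and U: "open U" "emeasure M U < \<infinity>"
    and approx: "\<And>e. e > 0 \<Longrightarrow> \<exists>K. compact K \<and> K \<subseteq> U \<inter> G \<and> measure M U \<le> measure M K + e"
  shows "U \<subseteq> G"
proof
  fix x assume "x \<in> U"
  show "x \<in> G"
  proof (rule ccontr)
    assume "x \<notin> G"
    define D where "D = U \<inter> (\<lambda>y. x + y) ` G"
    \<comment> \<open>\<open>D\<close> misses \<open>G\<close>, so \<open>\<lambda>(D) \<le> \<lambda>(U) - \<lambda>(K)\<close> for each approximating \<open>K \<subseteq> U \<inter> G\<close>.\<close>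
    have "0 \<in> G"
      using G(2) unfolding subgroup_set_def by blast
    then have "emeasure M D \<noteq> 0"
      unfolding D_def using \<open>x \<in> U\<close> G(1) U(1)
      by (intro emeasure_haar_open_nonzero[OF M, of _ x] open_Int open_translation_group)
         (auto intro!: image_eqI[where x = 0])
    have U_fin: "U \<in> fmeasurable M"
      using U sets_haar_measure_open[OF M] by (auto intro: fmeasurableI)
    have D_sets: "D \<in> sets M"
      unfolding D_def using G(1) U(1) by (intro sets_haar_measure_open[OF M] open_Int open_translation_group)
    have "measure M D \<le> 0"
    proof (rule field_le_epsilon)
      fix e :: real assume "e > 0"
      obtain K where K: "compact K" "K \<subseteq> U \<inter> G" "measure M U \<le> measure M K + e"
        using approx[OF \<open>e > 0\<close>] by blast
      have "D \<subseteq> U - K"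
        using K(2) subgroup_set_translation_disjoint[OF G(2) \<open>x \<notin> G\<close>] unfolding D_def by blast
      then have "measure M D \<le> measure M (U - K)"
        using U_fin D_sets sets_haar_measure_compact[OF M K(1)]
        by (intro measure_mono_fmeasurable fmeasurable_Diff) auto
      also have "\<dots> = measure M U - measure M K"
        using K(2) U_fin sets_haar_measure_compact[OF M K(1)]
        by (intro measure_Diff) (auto simp: fmeasurableD2)
      finally show "measure M D \<le> 0 + e"
        using K(3) by simp
    qed
    then have "measure M D = 0"
      using measure_nonneg[of M D] by linarith
    moreover have "emeasure M D \<noteq> \<infinity>"
      using emeasure_mono[of D U M] U_fin unfolding D_def by (auto simp: fmeasurable_def)
    ultimately show False
      using \<open>emeasure M D \<noteq> 0\<close> by (simp add: emeasure_eq_ennreal_measure)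
  qed
qed

lemma open_sigma_compact_subgroup_superset:
  fixes M :: "'a::{topological_ab_group_add,t2_space} measure"
  assumes "lca_group TYPE('a)" and M: "haar_measure M"
    and U: "open U" "emeasure M U < \<infinity>"
  obtains G where "open G" "subgroup_set G" "sigma_compact G" "U \<subseteq> G"
proof -
  have "locally_compact_space (euclidean :: 'a topology)"
    using assms(1) unfolding lca_group_def .
  then obtain V K\<^sub>0 where V: "openin euclidean V" "compactin euclidean K\<^sub>0" "(0::'a) \<in> V" "V \<subseteq> K\<^sub>0"
    unfolding locally_compact_space_def topspace_euclidean by blast
  have "\<exists>K. compact K \<and> K \<subseteq> U \<and> measure M U \<le> measure M K + inverse (Suc n)" for n
    by (rule haar_inner_approx_open[OF M U]) auto
  then obtain K :: "nat \<Rightarrow> 'a set"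
    where K: "\<And>n. compact (K n)" "\<And>n. K n \<subseteq> U" "\<And>n. measure M U \<le> measure M (K n) + inverse (Suc n)"
    by metis
  define G where "G = subgroup_generated (K\<^sub>0 \<union> (\<Union>n. K n))"
  have G: "subgroup_set G" "K\<^sub>0 \<union> (\<Union>n. K n) \<subseteq> G"
    unfolding G_def by (rule subgroup_set_subgroup_generated subset_subgroup_generated)+
  have "V \<subseteq> G"
    using V(4) G(2) by blast
  then have "open G"
    using open_subgroup_set_if_neighbourhood[OF G(1) V(1)[folded open_openin] V(3)] by blast
  moreover have "sigma_compact (\<Union>n. K n)"
    using K(1) by (intro sigma_compact_UN sigma_compact_compact) auto
  then have "sigma_compact G"
    unfolding G_def using V(2)
    by (intro sigma_compact_subgroup_generated sigma_compact_Un) (simp_all add: sigma_compact_compact)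
  moreover have "U \<subseteq> G"
  proof (rule haar_open_subset_open_subgroup[OF M \<open>open G\<close> G(1) U])
    fix e :: real assume "e > 0"
    then obtain n where "inverse (Suc n) < e"
      using reals_Archimedean by blast
    then have "measure M U \<le> measure M (K n) + e"
      using K(3)[of n] by linarith
    moreover have "K n \<subseteq> U \<inter> G"
      using K(2) G(2) by blast
    ultimately show "\<exists>K. compact K \<and> K \<subseteq> U \<inter> G \<and> measure M U \<le> measure M K + e"
      using K(1) by blast
  qed
  ultimately show ?thesis
    using that G(1) by blast
qed

lemma pos_def_onD:
  fixes n :: nat and c :: "nat \<Rightarrow> complex" and g :: "nat \<Rightarrow> 'a::ab_group_add"
  assumes "pos_def_on H f" "\<forall>i<n. g i \<in> H"
  shows "Im (\<Sum>i<n. \<Sum>j<n. c i * cnj (c j) * complex_of_real (f (g i - g j))) = 0 \<and>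
         0 \<le> Re (\<Sum>i<n. \<Sum>j<n. c i * cnj (c j) * complex_of_real (f (g i - g j)))"
  using assms unfolding pos_def_on_def Let_def by blast

lemma pos_def_on_le_one:
  fixes f :: "'a::ab_group_add \<Rightarrow> real"
  assumes f: "pos_def_on H f" "f 0 = 1" and "0 \<in> H" "x \<in> H"
  shows "f x \<le> 1"
proof -
  define g :: "nat \<Rightarrow> 'a" where "g i = (if i = 0 then 0 else x)" for i
  have g: "\<forall>i<2. g i \<in> H"
    using assms(3,4) by (simp add: g_def)
  have "f x = f (- x)"
    using pos_def_onD[OF f(1) g, of "\<lambda>i. if i = 0 then 1 else \<i>"]
    by (simp add: numeral_2_eq_2 g_def)
  moreover have "0 \<le> 2 - f x - f (- x)"
    using pos_def_onD[OF f(1) g, of "\<lambda>i. if i = 0 then 1 else -1"] f(2)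
    by (simp add: numeral_2_eq_2 g_def)
  ultimately show ?thesis
    by linarith
qed

lemma subgroup_set_coset_representative:
  fixes g :: "nat \<Rightarrow> 'a::ab_group_add"
  assumes H: "subgroup_set H"
  obtains r :: "nat \<Rightarrow> nat"
  where "\<And>i. g (r i) - g i \<in> H" "\<And>i j. r i = r j \<longleftrightarrow> g i - g j \<in> H"
proof -
  define r where "r i = (LEAST j. g j - g i \<in> H)" for i
  have "0 \<in> H"
    using H unfolding subgroup_set_def by blast
  have rep: "g (r i) - g i \<in> H" for i
    unfolding r_def by (rule LeastI[where k = i]) (simp add: \<open>0 \<in> H\<close>)
  have "r i = r j \<longleftrightarrow> g i - g j \<in> H" for i j
  proof
    assume "r i = r j"
    have "(g (r j) - g j) - (g (r i) - g i) \<in> H"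
      by (rule subgroup_set_diff[OF H rep rep])
    then show "g i - g j \<in> H"
      unfolding \<open>r i = r j\<close> by simp
  next
    assume ij: "g i - g j \<in> H"
    have "g k - g i \<in> H \<longleftrightarrow> g k - g j \<in> H" for k
    proof
      assume "g k - g i \<in> H"
      then have "(g k - g i) + (g i - g j) \<in> H"
        using H ij unfolding subgroup_set_def by blast
      then show "g k - g j \<in> H"
        by simp
    next
      assume "g k - g j \<in> H"
      then have "(g k - g j) - (g i - g j) \<in> H"
        using subgroup_set_diff[OF H _ ij] by blast
      then show "g k - g i \<in> H"
        by simp
    qed
    then have "(\<lambda>k. g k - g i \<in> H) = (\<lambda>k. g k - g j \<in> H)"
      by blast
    then show "r i = r j"
      unfolding r_def by (rule arg_cong)
  qed
  with rep show thesis
    by (rule that)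
qed

lemma sum_sum_if_same_class:
  fixes X :: "nat \<Rightarrow> nat \<Rightarrow> 'b::comm_monoid_add"
  shows "(\<Sum>i<n. \<Sum>j<n. if r i = r j then X i j else 0)
       = (\<Sum>k\<in>r ` {..<n}. \<Sum>i<n. \<Sum>j<n. if r i = k \<and> r j = k then X i j else 0)"
proof -
  have "(\<Sum>k\<in>r ` {..<n}. if r i = k \<and> r j = k then X i j else 0) = (if r i = r j then X i j else 0)"
    if "i \<in> {..<n}" for i j
  proof -
    have "(\<Sum>k\<in>r ` {..<n}. if r i = k \<and> r j = k then X i j else 0)
        = (\<Sum>k\<in>r ` {..<n}. if r i = k then (if r i = r j then X i j else 0) else 0)"
      by (intro sum.cong) auto
    also have "\<dots> = (if r i = r j then X i j else 0)"
      using that by (simp add: sum.delta')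
    finally show ?thesis .
  qed
  then have "(\<Sum>i<n. \<Sum>j<n. \<Sum>k\<in>r ` {..<n}. if r i = k \<and> r j = k then X i j else 0)
      = (\<Sum>i<n. \<Sum>j<n. if r i = r j then X i j else 0)"
    by (intro sum.cong refl) simp
  moreover have "(\<Sum>k\<in>r ` {..<n}. \<Sum>i<n. \<Sum>j<n. if r i = k \<and> r j = k then X i j else 0)
      = (\<Sum>i<n. \<Sum>j<n. \<Sum>k\<in>r ` {..<n}. if r i = k \<and> r j = k then X i j else 0)"
    by (simp only: sum.swap[where A = "r ` {..<n}"])
  ultimately show ?thesis
    by simp
qed

lemma pos_def_on_extend_zero:
  fixes f :: "'a::ab_group_add \<Rightarrow> real"
  assumes H: "subgroup_set H" and f: "pos_def_on H f"
  shows "pos_def_on UNIV (\<lambda>x. if x \<in> H then f x else 0)"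
  unfolding pos_def_on_def Let_def
proof (intro allI impI)
  fix n :: nat and c :: "nat \<Rightarrow> complex" and g :: "nat \<Rightarrow> 'a"
  obtain r where rep: "\<And>i. g (r i) - g i \<in> H" and same: "\<And>i j. r i = r j \<longleftrightarrow> g i - g j \<in> H"
    using subgroup_set_coset_representative[OF H] by blast
  define X where "X i j = c i * cnj (c j) * complex_of_real (f (g i - g j))" for i j
  define block where
    "block k = (\<Sum>i<n. \<Sum>j<n. if r i = k \<and> r j = k then X i j else 0)" for k
  \<comment> \<open>In the block of the coset class with representative \<open>k\<close>, the points \<open>g i - g k\<close>
    lie in \<open>H\<close> and the coefficients outside the class vanish, so each block is a
    quadratic form of \<open>f\<close> on \<open>H\<close>.\<close>
  have block_form: "block k = (\<Sum>i<n. \<Sum>j<n.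
      (if r i = k then c i else 0) * cnj (if r j = k then c j else 0) *
      complex_of_real (f ((if r i = k then g i - g k else 0) - (if r j = k then g j - g k else 0))))" for k
    unfolding block_def X_def by (intro sum.cong refl) simp
  have in_H: "\<forall>i<n. (if r i = k then g i - g k else 0) \<in> H" for k
  proof (intro allI impI)
    fix i
    have "- (g (r i) - g i) \<in> H" "0 \<in> H"
      using H rep unfolding subgroup_set_def by blast+
    then show "(if r i = k then g i - g k else 0) \<in> H"
      by auto
  qed
  have "(\<Sum>i<n. \<Sum>j<n. c i * cnj (c j) * complex_of_real (if g i - g j \<in> H then f (g i - g j) else 0))
      = (\<Sum>i<n. \<Sum>j<n. if r i = r j then X i j else 0)"
    unfolding X_def same by (intro sum.cong refl) auto
  also have "\<dots> = (\<Sum>k\<in>r ` {..<n}. block k)"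
    unfolding block_def by (rule sum_sum_if_same_class)
  finally have form: "(\<Sum>i<n. \<Sum>j<n. c i * cnj (c j) * complex_of_real (if g i - g j \<in> H then f (g i - g j) else 0))
      = (\<Sum>k\<in>r ` {..<n}. block k)" .
  have "Im (block k) = 0 \<and> 0 \<le> Re (block k)" for k
    unfolding block_form by (rule pos_def_onD[OF f in_H])
  then show "Im (\<Sum>i<n. \<Sum>j<n. c i * cnj (c j) * complex_of_real (if g i - g j \<in> H then f (g i - g j) else 0)) = 0 \<and>
        0 \<le> Re (\<Sum>i<n. \<Sum>j<n. c i * cnj (c j) * complex_of_real (if g i - g j \<in> H then f (g i - g j) else 0))"
    unfolding form Im_sum Re_sum by (auto intro: sum_nonneg)
qed

lemma restrict_space_UNIV: "restrict_space M UNIV = M"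
proof (rule measure_eqI)
  fix A assume "A \<in> sets (restrict_space M UNIV)"
  then show "emeasure (restrict_space M UNIV) A = emeasure M A"
    by (intro emeasure_restrict_space) simp_all
qed simp

lemma GG_le_indicator:
  assumes f: "f \<in> GG M S \<Omega>" and S: "subgroup_set S" and "x \<in> S"
  shows "f x \<le> indicator \<Omega> x"
proof (cases "f x > 0")
  case True
  have "0 \<in> S"
    using S unfolding subgroup_set_def by blast
  then have "f x \<le> 1"
    using f \<open>x \<in> S\<close> unfolding GG_def by (auto intro: pos_def_on_le_one)
  moreover have "x \<in> supp_on S (pos_part f)"
    using True \<open>x \<in> S\<close> closure_subset unfolding supp_on_def pos_part_def by fastforce
  then have "x \<in> \<Omega>"
    using f unfolding GG_def by blast
  ultimately show ?thesis
    by simp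
qed (simp add: indicator_def)

lemma integral_GG_le_measure:
  fixes M :: "'a::{topological_ab_group_add,t2_space} measure"
  assumes M: "haar_measure M" and f: "f \<in> GG M S \<Omega>" and S: "subgroup_set S" "S \<in> sets M"
    and \<Omega>: "\<Omega> \<in> sets M" "emeasure M \<Omega> < \<infinity>"
  shows "integral\<^sup>L (restrict_space M S) f \<le> measure M \<Omega>"
proof -
  have S': "S \<inter> space M \<in> sets M"
    using S(2) by simp
  have "integral\<^sup>L (restrict_space M S) f = integral\<^sup>L M (\<lambda>x. indicator S x * f x)"
    using integral_restrict_space[OF S', of f] by simp
  also have "\<dots> \<le> integral\<^sup>L M (indicator \<Omega>)"
  proof (rule integral_mono)
    show "integrable M (\<lambda>x. indicator S x * f x)"
      using f integrable_restrict_space[OF S', of f] unfolding GG_def by simp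
    show "integrable M (indicator \<Omega> :: 'a \<Rightarrow> real)"
      using \<Omega> by simp
    show "indicator S x * f x \<le> (indicator \<Omega> x :: real)" for x
      using GG_le_indicator[OF f S(1), of x] by (cases "x \<in> S") auto
  qed
  also have "\<dots> = measure M \<Omega>"
    using \<Omega> space_haar_measure[OF M] by simp
  finally show ?thesis .
qed

lemma GG_extend_zero:
  fixes M :: "'a::{topological_ab_group_add,t2_space} measure"
  assumes M: "haar_measure M" and G: "open G" "subgroup_set G" and g: "g \<in> GG M G \<Omega>"
  shows "(\<lambda>x. if x \<in> G then g x else 0) \<in> GG M UNIV \<Omega>"
    and "integral\<^sup>L M (\<lambda>x. if x \<in> G then g x else 0) = integral\<^sup>L (restrict_space M G) g"
proof -
  define f where "f x = (if x \<in> G then g x else 0)" for x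
  have "closed G"
    using closed_open_subgroup_set[OF G(2,1)] .
  have G': "G \<inter> space M \<in> sets M"
    using sets_haar_measure_open[OF M G(1)] by simp
  have f_eq: "f = (\<lambda>x. indicator G x * g x)"
    unfolding f_def by (auto simp: indicator_def)
  have "continuous_on (G \<union> - G) f"
  proof (rule continuous_on_open_Un)
    show "continuous_on G f"
      using g unfolding GG_def by (auto simp: f_def intro: continuous_on_eq)
    show "continuous_on (- G) f"
      by (rule continuous_on_eq[of _ "\<lambda>_. 0"]) (auto simp: f_def)
  qed (use G(1) \<open>closed G\<close> in auto)
  moreover have "pos_def_on UNIV f"
    unfolding f_def using G(2) g unfolding GG_def by (auto intro: pos_def_on_extend_zero)
  moreover have "f 0 = 1"
    using G(2) g unfolding GG_def subgroup_set_def f_def by auto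
  moreover have "integrable M f"
    using g integrable_restrict_space[OF G', of g] unfolding GG_def f_eq by simp
  moreover have "supp_on UNIV (pos_part f) = supp_on G (pos_part g)"
  proof -
    have "{x. pos_part f x \<noteq> 0} = {x\<in>G. pos_part g x \<noteq> 0}"
      unfolding f_def pos_part_def by auto
    moreover have "closure {x\<in>G. pos_part g x \<noteq> 0} \<subseteq> G"
      using \<open>closed G\<close> by (intro closure_minimal) auto
    ultimately show ?thesis
      unfolding supp_on_def by auto
  qed
  ultimately show "(\<lambda>x. if x \<in> G then g x else 0) \<in> GG M UNIV \<Omega>"
    using g unfolding GG_def f_def restrict_space_UNIV by auto
  show "integral\<^sup>L M (\<lambda>x. if x \<in> G then g x else 0) = integral\<^sup>L (restrict_space M G) g"
    using integral_restrict_space[OF G', of g] f_eq unfolding f_def by simp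
qed

lemma GG_restrict:
  fixes M :: "'a::{topological_ab_group_add,t2_space} measure"
  assumes G: "subgroup_set G" "G \<in> sets M" and "\<Omega> \<subseteq> G"
    and f: "f \<in> GG M UNIV \<Omega>"
  shows "f \<in> GG M G \<Omega>"
    and "integral\<^sup>L M f \<le> integral\<^sup>L (restrict_space M G) f"
proof -
  have G': "G \<inter> space M \<in> sets M"
    using G(2) by simp
  have f_int: "integrable M f"
    using f unfolding GG_def restrict_space_UNIV by simp
  have supp: "supp_on G (pos_part f) \<subseteq> supp_on UNIV (pos_part f)"
    unfolding supp_on_def using closure_mono[of "{x \<in> G. pos_part f x \<noteq> 0}" "{x. pos_part f x \<noteq> 0}"] by auto
  have f_G_int: "integrable M (\<lambda>x. indicator G x * f x)"
    using integrable_mult_indicator[OF G(2) f_int] by simp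
  show "f \<in> GG M G \<Omega>"
    using supp f f_G_int integrable_restrict_space[OF G', of f]
    unfolding GG_def pos_def_on_def by (auto intro: continuous_on_subset)
  have "integral\<^sup>L M f \<le> integral\<^sup>L M (\<lambda>x. indicator G x * f x)"
  proof (rule integral_mono[OF f_int f_G_int])
    fix x
    show "f x \<le> indicator G x * f x"
    proof (cases "x \<in> G")
      case False
      with \<open>\<Omega> \<subseteq> G\<close> have "x \<notin> \<Omega>"
        by blast
      then show ?thesis
        using GG_le_indicator[OF f subgroup_set_UNIV UNIV_I[of x]] False by simp
    qed simp
  qed
  then show "integral\<^sup>L M f \<le> integral\<^sup>L (restrict_space M G) f"
    using integral_restrict_space[OF G', of f] by simp
qed

lemma DD_eqI:
  assumes ST: "\<And>f. f \<in> GG M S \<Omega> \<Longrightarrow> \<exists>g\<in>GG M T \<Omega>. integral\<^sup>L (restrict_space M S) f \<le> integral\<^sup>L (restrict_space M T) g"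
    and TS: "\<And>g. g \<in> GG M T \<Omega> \<Longrightarrow> \<exists>f\<in>GG M S \<Omega>. integral\<^sup>L (restrict_space M T) g \<le> integral\<^sup>L (restrict_space M S) f"
    and bdd: "bdd_above ((\<lambda>f. integral\<^sup>L (restrict_space M S) f) ` GG M S \<Omega>)"
      "bdd_above ((\<lambda>g. integral\<^sup>L (restrict_space M T) g) ` GG M T \<Omega>)"
  shows "DD M S \<Omega> = DD M T \<Omega>"
proof (cases "GG M S \<Omega> = {}")
  case True
  then have "GG M T \<Omega> = {}"
    using TS by blast
  with True show ?thesis
    unfolding DD_def by simp
next
  case False
  then have "GG M T \<Omega> \<noteq> {}"
    using ST by blast
  have "(SUP f\<in>GG M S \<Omega>. integral\<^sup>L (restrict_space M S) f) \<le> (SUP g\<in>GG M T \<Omega>. integral\<^sup>L (restrict_space M T) g)"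
    by (rule cSUP_mono[OF False bdd(2) ST])
  moreover have "(SUP g\<in>GG M T \<Omega>. integral\<^sup>L (restrict_space M T) g) \<le> (SUP f\<in>GG M S \<Omega>. integral\<^sup>L (restrict_space M S) f)"
    by (rule cSUP_mono[OF \<open>GG M T \<Omega> \<noteq> {}\<close> bdd(1) TS])
  ultimately show ?thesis
    unfolding DD_def using False \<open>GG M T \<Omega> \<noteq> {}\<close> by simp
qed

lemma DD_UNIV_eq_open_subgroup:
  fixes M :: "'a::{topological_ab_group_add,t2_space} measure"
  assumes M: "haar_measure M" and G: "open G" "subgroup_set G" "\<Omega> \<subseteq> G"
    and \<Omega>: "\<Omega> \<in> sets M" "emeasure M \<Omega> < \<infinity>"
  shows "DD M UNIV \<Omega> = DD M G \<Omega>"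
proof (rule DD_eqI)
  have "G \<in> sets M"
    using sets_haar_measure_open[OF M G(1)] .
  then show "\<exists>g\<in>GG M G \<Omega>. integral\<^sup>L (restrict_space M UNIV) f \<le> integral\<^sup>L (restrict_space M G) g"
    if "f \<in> GG M UNIV \<Omega>" for f
    using GG_restrict[OF G(2) _ G(3) that] unfolding restrict_space_UNIV by blast
  show "\<exists>f\<in>GG M UNIV \<Omega>. integral\<^sup>L (restrict_space M G) g \<le> integral\<^sup>L (restrict_space M UNIV) f"
    if "g \<in> GG M G \<Omega>" for g
    using GG_extend_zero[OF M G(1,2) that] unfolding restrict_space_UNIV by force
  have "UNIV \<in> sets M"
    using sets.top[of M] space_haar_measure[OF M] by simp
  then show "bdd_above ((\<lambda>f. integral\<^sup>L (restrict_space M UNIV) f) ` GG M UNIV \<Omega>)"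
    using integral_GG_le_measure[OF M _ subgroup_set_UNIV _ \<Omega>]
    by (intro bdd_aboveI2[where M = "measure M \<Omega>"]) blast
  show "bdd_above ((\<lambda>g. integral\<^sup>L (restrict_space M G) g) ` GG M G \<Omega>)"
    using integral_GG_le_measure[OF M _ G(2) \<open>G \<in> sets M\<close> \<Omega>]
    by (intro bdd_aboveI2[where M = "measure M \<Omega>"]) blast
qed

theorem theorem3:
  fixes M :: "'a::{topological_ab_group_add,t2_space} measure"
    and \<Omega> :: "'a set"
  assumes "lca_group TYPE('a)"
    and "haar_measure M"
    and "\<Omega> \<in> sets M"
    and "emeasure M \<Omega> < \<infinity>"
  shows "\<exists>H. open H \<and> subgroup_set H \<and> sigma_compact H \<and> \<Omega> \<subseteq> H \<and>
             DD M UNIV \<Omega> = DD M H \<Omega>"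
proof -
  have "(INF U\<in>{U. open U \<and> \<Omega> \<subseteq> U}. emeasure M U) < \<infinity>"
    using haar_measureD(3)[OF assms(2,3)] assms(4) by simp
  then obtain U where U: "open U" "\<Omega> \<subseteq> U" "emeasure M U < \<infinity>"
    by (auto simp: INF_less_iff)
  obtain H where H: "open H" "subgroup_set H" "sigma_compact H" "U \<subseteq> H"
    using open_sigma_compact_subgroup_superset[OF assms(1,2) U(1,3)] by blast
  have "DD M UNIV \<Omega> = DD M H \<Omega>"
    using H U(2) by (intro DD_UNIV_eq_open_subgroup[OF assms(2) H(1,2) _ assms(3,4)]) blast
  with H U(2) show ?thesis
    by blast
qed

end
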